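(* Let $(U,V_1)$ be random variables with joint distribution $p(u,v_1)$, let $p(v)$ denote the marginal of $V_1$, and let $k\ge 2$. Fix a measurable function $f$ with real values defined on pairs $(u,v)$, and for each $u$ put $c(u)=\mathbf{E}_{v\sim p(v)}[e^{f(u,v)}]$, assumed finite. For each $u$ choose a Borel set $B_u\subset\mathbf{R}$ strictly lower-bounded by $c(u)$, i.e. $b>c(u)$ for every $b\in B_u$, and set $S_{B_u}=\{v : e^{f(u,v)}\in B_u\}$, assumed to satisfy $p(S_{B_u})>0$. Define the conditional distribution $q(\cdot\mid u)$ of $V_{2:k}=(V_2,\dots,V_k)$ on Borel rectangles $A=A_2\times\cdots\times A_k$ by $$q(V_{2:k}\in A\mid u)=\prod_{j=2}^k p(A_j\mid S_{B_u}),\qquad p(A_j\mid S_{B_u})=\frac{p(A_j\cap S_{B_u})}{p(S_{B_u})},$$ (so $V_2,\dots,V_k$ are i.i.d. from the marginal $p(v)$ conditioned on $S_{B_u}$). Define $$\mathcal{L}_{\mathrm{CNCE}}(U;V_1)=\mathbf{E}_{(u,v_1)\sim p(u,v_1)}\,\mathbf{E}_{v_{2:k}\sim q(\cdot\mid u)}\left[\log\frac{e^{f(u,v_1)}}{\frac1k\sum_{j=1}^k e^{f(u,v_j)}}\right]$$ and $$\mathcal{L}_{\mathrm{NCE}}(U;V_1)=\mathbf{E}_{(u,v_1)\sim p(u,v_1)}\,\mathbf{E}_{v_2,\dots,v_k\overset{\text{i.i.d.}}{\sim} p(v)}\left[\log\frac{e^{f(u,v_1)}}{\frac1k\sum_{j=1}^k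 e^{f(u,v_j)}}\right],$$ assuming all expectations are well defined. Then $$\mathcal{L}_{\mathrm{CNCE}}(U;V_1)\le \mathcal{L}_{\mathrm{NCE}}(U;V_1)\le \mathcal{I}(U;V_1),$$ where $\mathcal{I}(U;V_1)$ is the mutual information between $U$ and $V_1$.
   Context: $\mathcal{L}_{\mathrm{NCE}}$ is the noise-contrastive estimation (InfoNCE) objective, in which the "negative examples" $v_2,\dots,v_k$ are drawn i.i.d. from the marginal of $V_1$, independently of $(u,v_1)$; $\mathcal{L}_{\mathrm{CNCE}}$ (conditional NCE) is the same objective with negatives drawn from the restricted, renormalized marginal $q$. *)

theory Defs
  imports "HOL-Probability.Probability"
begin

definition marg_V :: "('a \<times> 'b) measure \<Rightarrow> 'b measure \<Rightarrow> 'b measure" where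
  "marg_V P MV = distr P MV snd"

definition nce_score :: "nat \<Rightarrow> ('a \<times> 'b \<Rightarrow> real) \<Rightarrow> 'a \<Rightarrow> 'b \<Rightarrow> (nat \<Rightarrow> 'b) \<Rightarrow> real" where
  "nce_score k f u v1 vs =
     ln (exp (f (u, v1)) / ((1 / real k) * (exp (f (u, v1)) + (\<Sum>j\<in>{2..k}. exp (f (u, vs j))))))"

definition L_NCE :: "('a \<times> 'b) measure \<Rightarrow> 'b measure \<Rightarrow> nat \<Rightarrow> ('a \<times> 'b \<Rightarrow> real) \<Rightarrow> real" where
  "L_NCE P MV k f =
     (\<integral>x. (\<integral>vs. nce_score k f (fst x) (snd x) vs \<partial>(PiM {2..k} (\<lambda>_. marg_V P MV))) \<partial>P)"

text \<open>Conditional negative law q(.|u): V_2..V_k i.i.d. from the marginal conditioned on S u.\<close>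
definition q_neg :: "('a \<times> 'b) measure \<Rightarrow> 'b measure \<Rightarrow> nat \<Rightarrow> ('a \<Rightarrow> 'b set) \<Rightarrow> 'a \<Rightarrow> (nat \<Rightarrow> 'b) measure" where
  "q_neg P MV k S u = PiM {2..k} (\<lambda>_. uniform_measure (marg_V P MV) (S u))"

definition L_CNCE :: "('a \<times> 'b) measure \<Rightarrow> 'b measure \<Rightarrow> nat \<Rightarrow> ('a \<times> 'b \<Rightarrow> real) \<Rightarrow> ('a \<Rightarrow> 'b set) \<Rightarrow> real" where
  "L_CNCE P MV k f S =
     (\<integral>x. (\<integral>vs. nce_score k f (fst x) (snd x) vs \<partial>(q_neg P MV k S (fst x))) \<partial>P)"

text \<open>Mutual information I(U;V1) (natural log) as an extended real: the KL divergence of the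
  joint law from the product of marginals, which is +\<infinity> if the joint law is not absolutely
  continuous w.r.t. the product, or if the log-density is not integrable (its negative part is
  always integrable, so non-integrability means the integral is +\<infinity>).\<close>
definition mutual_info :: "'a measure \<Rightarrow> 'b measure \<Rightarrow> ('a \<times> 'b) measure \<Rightarrow> ereal" where
  "mutual_info MU MV P =
    (let Q = distr P MU fst \<Otimes>\<^sub>M distr P MV snd;
         J = distr P (MU \<Otimes>\<^sub>M MV) (\<lambda>x. (fst x, snd x))
     in if absolutely_continuous Q J \<and> integrable J (entropy_density (exp 1) Q J)
        then ereal (prob_space.mutual_information P (exp 1) MU MV fst snd)
        else \<infinity>)"

end

theory Submission
  imports Defs
begin

text \<open>
  Fix \<open>u\<close> and write \<open>e v = exp (f (u, v))\<close>, \<open>c\<close> for the mean of \<open>e\<close> and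
  \<open>X = e v\<^sub>1 + (e v\<^sub>2 + \<dots> + e v\<^sub>k)\<close>, so that the score is \<open>ln (k e v\<^sub>1) - ln X\<close>.
  Under the conditioned law every negative has \<open>e v\<^sub>j > c\<close>, hence \<open>X \<ge> e v\<^sub>1 + (k - 1) c\<close>
  almost surely; under i.i.d.\ negatives \<open>e v\<^sub>1 + (k - 1) c\<close> is the mean of \<open>X\<close>, and Jensen's
  inequality for the concave \<open>ln\<close> gives \<open>L_CNCE \<le> L_NCE\<close>.

  For the second inequality, exchangeability of \<open>v\<^sub>1, \<dots>, v\<^sub>k\<close> shows that \<open>k e v\<^sub>1 / X\<close> has
  expectation \<open>1\<close> when \<open>v\<^sub>1\<close> is drawn independently of \<open>u\<close>, so its average \<open>G\<close> over the
  negatives integrates to \<open>1\<close> against the product \<open>Q\<close> of the marginals. Jensen bounds the inner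
  NCE expectation by \<open>ln G\<close>, and \<open>ln t \<le> t - 1\<close> at \<open>t = G / (dP/dQ)\<close> gives
  \<open>E\<^sub>P ln G \<le> KL(P \<parallel> Q)\<close>, which is the mutual information.
\<close>

definition nce_ratio :: "nat \<Rightarrow> ('a \<times> 'b \<Rightarrow> real) \<Rightarrow> 'a \<Rightarrow> 'b \<Rightarrow> (nat \<Rightarrow> 'b) \<Rightarrow> real" where
  "nce_ratio k f u v1 vs =
     real k * exp (f (u, v1)) / (exp (f (u, v1)) + (\<Sum>j\<in>{2..k}. exp (f (u, vs j))))"

lemma nce_score_eq_ln_ratio: "nce_score k f u v1 vs = ln (nce_ratio k f u v1 vs)"
  unfolding nce_score_def nce_ratio_def by (cases "k = 0") (simp_all add: field_simps)

lemma nce_ratio_pos: "0 < k \<Longrightarrow> 0 < nce_ratio k f u v1 vs"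
  unfolding nce_ratio_def by (intro divide_pos_pos mult_pos_pos add_pos_nonneg sum_nonneg) auto

lemma nce_ratio_le: "nce_ratio k f u v1 vs \<le> real k"
  unfolding nce_ratio_def
  by (simp add: divide_le_eq add_pos_nonneg sum_nonneg mult_left_mono)

lemma nce_score_eq_diff:
  assumes "0 < k"
  shows "nce_score k f u v1 vs =
     ln (real k) + f (u, v1) - ln (exp (f (u, v1)) + (\<Sum>j\<in>{2..k}. exp (f (u, vs j))))"
proof -
  have "0 < exp (f (u, v1)) + (\<Sum>j\<in>{2..k}. exp (f (u, vs j)))"
    by (intro add_pos_nonneg sum_nonneg) auto
  then show ?thesis
    using assms by (simp add: nce_score_eq_ln_ratio nce_ratio_def ln_div ln_mult)
qed

lemma (in prob_space) expectation_ln_le_ln_expectation: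
  fixes X :: "'a \<Rightarrow> real"
  assumes "integrable M X" "AE x in M. 0 < X x" "integrable M (\<lambda>x. ln (X x))"
  shows "expectation (\<lambda>x. ln (X x)) \<le> ln (expectation X)"
proof -
  have "- ln (expectation X) \<le> expectation (\<lambda>x. - ln (X x))"
    using assms ln_concave
    by (intro jensens_inequality[where q="\<lambda>x. - ln x" and I="{0<..}" and a=0])
       (auto simp: concave_on_def)
  then show ?thesis by simp
qed

lemma
  fixes \<mu> :: "'b measure" and e :: "'b \<Rightarrow> real" and K :: "'i set"
  assumes \<mu>: "prob_space \<mu>" and K: "finite K" and e: "integrable \<mu> e"
  shows integrable_PiM_sum_component: "integrable (\<Pi>\<^sub>M j\<in>K. \<mu>) (\<lambda>\<omega>. \<Sum>j\<in>K. e (\<omega> j))"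
    and integral_PiM_sum_component:
      "(\<integral>\<omega>. (\<Sum>j\<in>K. e (\<omega> j)) \<partial>(\<Pi>\<^sub>M j\<in>K. \<mu>)) = real (card K) * (\<integral>v. e v \<partial>\<mu>)"
proof -
  have e_meas[measurable]: "e \<in> borel_measurable \<mu>" using e by simp
  have component: "integrable (\<Pi>\<^sub>M j\<in>K. \<mu>) (\<lambda>\<omega>. e (\<omega> j))"
      "(\<integral>\<omega>. e (\<omega> j) \<partial>(\<Pi>\<^sub>M j\<in>K. \<mu>)) = (\<integral>v. e v \<partial>\<mu>)" if j: "j \<in> K" for j
  proof -
    have law: "distr (\<Pi>\<^sub>M j\<in>K. \<mu>) \<mu> (\<lambda>\<omega>. \<omega> j) = \<mu>"
      using j \<mu> by (intro distr_PiM_component) auto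
    have meas: "(\<lambda>\<omega>. \<omega> j) \<in> measurable (\<Pi>\<^sub>M j\<in>K. \<mu>) \<mu>"
      using j by (intro measurable_component_singleton)
    show "integrable (\<Pi>\<^sub>M j\<in>K. \<mu>) (\<lambda>\<omega>. e (\<omega> j))"
      using integrable_distr_eq[OF meas e_meas] e law by simp
    show "(\<integral>\<omega>. e (\<omega> j) \<partial>(\<Pi>\<^sub>M j\<in>K. \<mu>)) = (\<integral>v. e v \<partial>\<mu>)"
      using integral_distr[OF meas e_meas] law by simp
  qed
  show "integrable (\<Pi>\<^sub>M j\<in>K. \<mu>) (\<lambda>\<omega>. \<Sum>j\<in>K. e (\<omega> j))"
    using component by (intro Bochner_Integration.integrable_sum) auto
  show "(\<integral>\<omega>. (\<Sum>j\<in>K. e (\<omega> j)) \<partial>(\<Pi>\<^sub>M j\<in>K. \<mu>)) = real (card K) * (\<integral>v. e v \<partial>\<mu>)"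
    using component by (simp add: Bochner_Integration.integral_sum)
qed

lemma integral_PiM_ln_sum_ge:
  fixes \<mu> :: "'b measure" and e :: "'b \<Rightarrow> real" and K :: "'i set"
  assumes \<mu>: "prob_space \<mu>" and K: "finite K" and e: "integrable \<mu> e" "\<And>v. 0 \<le> e v"
    and E: "0 < E"
    and int: "integrable (\<Pi>\<^sub>M j\<in>K. \<mu>) (\<lambda>\<omega>. C - ln (E + (\<Sum>j\<in>K. e (\<omega> j))))"
  shows "C - ln (E + real (card K) * (\<integral>v. e v \<partial>\<mu>))
    \<le> (\<integral>\<omega>. C - ln (E + (\<Sum>j\<in>K. e (\<omega> j))) \<partial>(\<Pi>\<^sub>M j\<in>K. \<mu>))"
proof -
  interpret \<Pi>: prob_space "\<Pi>\<^sub>M j\<in>K. \<mu>"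
    using \<mu> by (intro prob_space_PiM)
  let ?X = "\<lambda>\<omega>. E + (\<Sum>j\<in>K. e (\<omega> j))"
  have X_int: "integrable (\<Pi>\<^sub>M j\<in>K. \<mu>) ?X"
    using integrable_PiM_sum_component[OF \<mu> K e(1)] by simp
  have X_mean: "\<Pi>.expectation ?X = E + real (card K) * (\<integral>v. e v \<partial>\<mu>)"
    using integrable_PiM_sum_component[OF \<mu> K e(1)] integral_PiM_sum_component[OF \<mu> K e(1)]
    by (simp add: \<Pi>.prob_space)
  have lnX_int: "integrable (\<Pi>\<^sub>M j\<in>K. \<mu>) (\<lambda>\<omega>. ln (?X \<omega>))"
    using Bochner_Integration.integrable_diff[OF \<Pi>.integrable_const[of C] int] by simp
  have "0 < ?X \<omega>" for \<omega>
    using E e(2) by (intro add_pos_nonneg sum_nonneg) auto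
  then have "\<Pi>.expectation (\<lambda>\<omega>. ln (?X \<omega>)) \<le> ln (\<Pi>.expectation ?X)"
    by (intro \<Pi>.expectation_ln_le_ln_expectation X_int lnX_int) auto
  then show ?thesis
    using lnX_int X_mean by (simp add: \<Pi>.prob_space)
qed

lemma integral_PiM_uniform_ln_sum_le:
  fixes \<mu> :: "'b measure" and e :: "'b \<Rightarrow> real" and K :: "'i set"
  assumes \<mu>: "prob_space \<mu>" and K: "finite K"
    and S: "S \<in> sets \<mu>" "measure \<mu> S > 0" and e_S: "\<And>v. v \<in> S \<Longrightarrow> c \<le> e v"
    and pos: "0 < E + real (card K) * c"
    and int: "integrable (\<Pi>\<^sub>M j\<in>K. uniform_measure \<mu> S) (\<lambda>\<omega>. C - ln (E + (\<Sum>j\<in>K. e (\<omega> j))))"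
  shows "(\<integral>\<omega>. C - ln (E + (\<Sum>j\<in>K. e (\<omega> j))) \<partial>(\<Pi>\<^sub>M j\<in>K. uniform_measure \<mu> S))
    \<le> C - ln (E + real (card K) * c)"
proof -
  interpret \<mu>: prob_space \<mu> by fact
  have S_emeasure: "emeasure \<mu> S \<noteq> 0" "emeasure \<mu> S \<noteq> \<infinity>"
    using S(2) \<mu>.emeasure_eq_measure by auto
  have cond: "prob_space (uniform_measure \<mu> S)"
    using S_emeasure by (intro prob_space_uniform_measure)
  interpret q: prob_space "\<Pi>\<^sub>M j\<in>K. uniform_measure \<mu> S"
    using cond by (intro prob_space_PiM)
  have "AE \<omega> in \<Pi>\<^sub>M j\<in>K. uniform_measure \<mu> S. \<forall>j\<in>K. \<omega> j \<in> S"
  proof (intro AE_finite_allI K)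
    fix j assume "j \<in> K"
    moreover have "AE v in uniform_measure \<mu> S. v \<in> S"
      using S_emeasure S(1) by (subst AE_uniform_measure) (auto simp: less_top[symmetric])
    ultimately show "AE \<omega> in \<Pi>\<^sub>M j\<in>K. uniform_measure \<mu> S. \<omega> j \<in> S"
      using cond by (intro AE_PiM_component)
  qed
  then have "AE \<omega> in \<Pi>\<^sub>M j\<in>K. uniform_measure \<mu> S.
      C - ln (E + (\<Sum>j\<in>K. e (\<omega> j))) \<le> C - ln (E + real (card K) * c)"
  proof eventually_elim
    case (elim \<omega>)
    then have "real (card K) * c \<le> (\<Sum>j\<in>K. e (\<omega> j))"
      using sum_mono[of K "\<lambda>_. c" "\<lambda>j. e (\<omega> j)"] e_S by auto
    then show ?case using pos by simp
  qed
  then show ?thesis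
    using q.integral_le_const int by blast
qed

lemma nn_integral_PiM_share_swap:
  fixes \<mu> :: "'b measure" and e :: "'b \<Rightarrow> real" and K :: "'i set"
  assumes \<mu>: "prob_space \<mu>" and e[measurable]: "e \<in> borel_measurable \<mu>"
    and K: "finite K" and i: "i \<in> K" and a: "a \<in> K"
  shows "(\<integral>\<^sup>+\<omega>. ennreal (e (\<omega> i) / (\<Sum>j\<in>K. e (\<omega> j))) \<partial>(\<Pi>\<^sub>M j\<in>K. \<mu>))
       = (\<integral>\<^sup>+\<omega>. ennreal (e (\<omega> a) / (\<Sum>j\<in>K. e (\<omega> j))) \<partial>(\<Pi>\<^sub>M j\<in>K. \<mu>))"
proof -
  define t where "t = id(a := i, i := a)"
  have t_bij: "bij_betw t K K"
    using i a by (intro bij_betwI[where g=t]) (auto simp: t_def)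
  let ?swap = "\<lambda>\<omega>. \<lambda>n\<in>K. \<omega> (t n)"
  have law: "distr (\<Pi>\<^sub>M j\<in>K. \<mu>) (\<Pi>\<^sub>M j\<in>K. \<mu>) ?swap = (\<Pi>\<^sub>M j\<in>K. \<mu>)"
    using distr_PiM_reindex[of K "\<lambda>_. \<mu>" t K] \<mu> t_bij by (simp add: bij_betw_def bij_betw_imp_funcset)
  have meas: "?swap \<in> measurable (\<Pi>\<^sub>M j\<in>K. \<mu>) (\<Pi>\<^sub>M j\<in>K. \<mu>)"
    using bij_betw_imp_funcset[OF t_bij]
    by (intro measurable_restrict) (auto intro!: measurable_component_singleton)
  have sum_swap: "(\<Sum>j\<in>K. e (\<omega> (t j))) = (\<Sum>j\<in>K. e (\<omega> j))" for \<omega>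
    using sum.reindex_bij_betw[OF t_bij, of "\<lambda>j. e (\<omega> j)"] by simp
  have "(\<integral>\<^sup>+\<omega>. ennreal (e (\<omega> a) / (\<Sum>j\<in>K. e (\<omega> j))) \<partial>(\<Pi>\<^sub>M j\<in>K. \<mu>))
      = (\<integral>\<^sup>+\<omega>. ennreal (e (\<omega> (t a)) / (\<Sum>j\<in>K. e (\<omega> (t j)))) \<partial>(\<Pi>\<^sub>M j\<in>K. \<mu>))"
    by (subst law[symmetric], subst nn_integral_distr[OF meas]) (use a in simp_all)
  also have "\<dots> = (\<integral>\<^sup>+\<omega>. ennreal (e (\<omega> i) / (\<Sum>j\<in>K. e (\<omega> j))) \<partial>(\<Pi>\<^sub>M j\<in>K. \<mu>))"
    by (simp only: sum_swap) (simp add: t_def)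
  finally show ?thesis ..
qed

lemma nn_integral_PiM_share:
  fixes \<mu> :: "'b measure" and e :: "'b \<Rightarrow> real" and K :: "'i set"
  assumes \<mu>: "prob_space \<mu>" and e[measurable]: "e \<in> borel_measurable \<mu>" and e_pos: "\<And>v. 0 < e v"
    and K: "finite K" and i: "i \<in> K"
  shows "(\<integral>\<^sup>+\<omega>. ennreal (real (card K) * e (\<omega> i) / (\<Sum>j\<in>K. e (\<omega> j))) \<partial>(\<Pi>\<^sub>M j\<in>K. \<mu>)) = 1"
proof -
  interpret \<Pi>: prob_space "\<Pi>\<^sub>M j\<in>K. \<mu>"
    using \<mu> by (intro prob_space_PiM)
  let ?share = "\<lambda>i. \<integral>\<^sup>+\<omega>. ennreal (e (\<omega> i) / (\<Sum>j\<in>K. e (\<omega> j))) \<partial>(\<Pi>\<^sub>M j\<in>K. \<mu>)"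
  have total: "(\<Sum>j\<in>K. e (\<omega> j)) > 0" for \<omega>
    using K i e_pos by (intro sum_pos) auto
  have "(\<Sum>a\<in>K. ?share a) = (\<integral>\<^sup>+\<omega>. (\<Sum>a\<in>K. ennreal (e (\<omega> a) / (\<Sum>j\<in>K. e (\<omega> j)))) \<partial>(\<Pi>\<^sub>M j\<in>K. \<mu>))"
    by (subst nn_integral_sum) auto
  also have "\<dots> = (\<integral>\<^sup>+\<omega>. 1 \<partial>(\<Pi>\<^sub>M j\<in>K. \<mu>))"
  proof (rule nn_integral_cong)
    fix \<omega>
    have "(\<Sum>a\<in>K. ennreal (e (\<omega> a) / (\<Sum>j\<in>K. e (\<omega> j)))) = ennreal (\<Sum>a\<in>K. e (\<omega> a) / (\<Sum>j\<in>K. e (\<omega> j)))"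
      using total[of \<omega>] e_pos by (intro sum_ennreal) (auto intro: less_imp_le)
    also have "(\<Sum>a\<in>K. e (\<omega> a) / (\<Sum>j\<in>K. e (\<omega> j))) = 1"
      using total[of \<omega>] by (simp add: sum_divide_distrib[symmetric])
    finally show "(\<Sum>a\<in>K. ennreal (e (\<omega> a) / (\<Sum>j\<in>K. e (\<omega> j)))) = 1" by simp
  qed
  also have "\<dots> = 1"
    using \<Pi>.emeasure_space_1 by simp
  finally have "(\<Sum>a\<in>K. ?share a) = 1" .
  moreover have "(\<Sum>a\<in>K. ?share a) = (\<Sum>a\<in>K. ?share i)"
    using nn_integral_PiM_share_swap[OF \<mu> e K i] by (intro sum.cong) auto
  moreover have "(\<integral>\<^sup>+\<omega>. ennreal (real (card K) * e (\<omega> i) / (\<Sum>j\<in>K. e (\<omega> j))) \<partial>(\<Pi>\<^sub>M j\<in>K. \<mu>))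
      = ennreal (real (card K)) * ?share i"
    using i by (subst nn_integral_cmult[symmetric])
       (auto intro!: nn_integral_cong simp: ennreal_mult'[symmetric])
  ultimately show ?thesis
    by (simp add: ennreal_of_nat_eq_real_of_nat)
qed

text \<open>The positive sample is one more i.i.d.\ coordinate, inserted at a fresh index.\<close>

lemma nn_integral_nce_ratio:
  fixes \<mu> :: "'b measure" and e :: "'b \<Rightarrow> real" and K :: "nat set"
  assumes \<mu>: "prob_space \<mu>" and e[measurable]: "e \<in> borel_measurable \<mu>" and e_pos: "\<And>v. 0 < e v"
    and K: "finite K"
  shows "(\<integral>\<^sup>+y. \<integral>\<^sup>+\<omega>. ennreal (real (card K + 1) * e y / (e y + (\<Sum>j\<in>K. e (\<omega> j))))
            \<partial>(\<Pi>\<^sub>M j\<in>K. \<mu>) \<partial>\<mu>) = 1"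
proof -
  obtain i where i: "i \<notin> K"
    using K ex_new_if_finite infinite_UNIV_nat by blast
  interpret product_prob_space "\<lambda>_::nat. \<mu>"
    using \<mu> by (simp add: product_prob_space_def product_prob_space_axioms_def
        product_sigma_finite_def prob_space_imp_sigma_finite)
  have sum_upd: "(\<Sum>j\<in>insert i K. e ((w(i := y)) j)) = e y + (\<Sum>j\<in>K. e (w j))" for w y
    using K i by (auto intro!: sum.cong)
  have "1 = (\<integral>\<^sup>+w. ennreal (real (card (insert i K)) * e (w i) / (\<Sum>j\<in>insert i K. e (w j)))
      \<partial>(\<Pi>\<^sub>M j\<in>insert i K. \<mu>))"
    using K by (intro nn_integral_PiM_share[OF \<mu> e e_pos, symmetric]) auto
  also have "\<dots> = (\<integral>\<^sup>+y. \<integral>\<^sup>+w. ennreal (real (card (insert i K)) * e ((w(i := y)) i)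
          / (\<Sum>j\<in>insert i K. e ((w(i := y)) j))) \<partial>(\<Pi>\<^sub>M j\<in>K. \<mu>) \<partial>\<mu>)"
    using K i by (intro product_nn_integral_insert_rev) measurable
  finally show ?thesis
    using K i by (simp add: sum_upd add.commute fun_upd_same del: fun_upd_apply)
qed

lemma ennreal_mult_divide_enn2real_le: "D * ennreal (g / enn2real D) \<le> ennreal g"
proof (cases D rule: ennreal_cases)
  case (real r)
  then show ?thesis
    by (cases "r = 0 \<or> g \<le> 0")
       (auto simp: ennreal_mult''[symmetric] ennreal_neg divide_nonpos_nonneg)
qed simp

lemma AE_enn2real_RN_deriv_pos:
  assumes P: "sigma_finite_measure P" and Q: "sigma_finite_measure Q" and sets_Q: "sets Q = sets P"
    and ac: "absolutely_continuous Q P"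
  shows "AE x in P. 0 < enn2real (RN_deriv Q P x)"
proof -
  have "AE x in Q. RN_deriv Q P x \<noteq> \<infinity>"
    using P ac sets_Q by (intro sigma_finite_measure.RN_deriv_finite[OF Q]) auto
  then have "AE x in density Q (RN_deriv Q P). 0 < RN_deriv Q P x \<and> RN_deriv Q P x \<noteq> \<infinity>"
    by (subst AE_density) auto
  then show ?thesis
    unfolding sigma_finite_measure.density_RN_deriv[OF Q ac sets_Q[symmetric]]
    by eventually_elim (auto simp: enn2real_positive_iff less_top)
qed

lemma nn_integral_divide_RN_deriv_le:
  assumes Q: "sigma_finite_measure Q" and sets_Q: "sets Q = sets P"
    and ac: "absolutely_continuous Q P" and G_meas: "G \<in> borel_measurable Q"
  shows "(\<integral>\<^sup>+x. ennreal (G x / enn2real (RN_deriv Q P x)) \<partial>P) \<le> (\<integral>\<^sup>+x. ennreal (G x) \<partial>Q)"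
proof -
  have "(\<integral>\<^sup>+x. ennreal (G x / enn2real (RN_deriv Q P x)) \<partial>P)
      = (\<integral>\<^sup>+x. RN_deriv Q P x * ennreal (G x / enn2real (RN_deriv Q P x)) \<partial>Q)"
    using G_meas
    by (subst sigma_finite_measure.density_RN_deriv[OF Q ac sets_Q[symmetric], symmetric],
        intro nn_integral_density) auto
  also have "\<dots> \<le> (\<integral>\<^sup>+x. ennreal (G x) \<partial>Q)"
    by (intro nn_integral_mono ennreal_mult_divide_enn2real_le)
  finally show ?thesis .
qed

lemma KL_divergence_ge_integral:
  fixes P Q :: "'a measure" and G h :: "'a \<Rightarrow> real"
  assumes P: "prob_space P" and Q: "sigma_finite_measure Q" and sets_Q: "sets Q = sets P"
    and ac: "absolutely_continuous Q P"
    and ent_int: "integrable P (entropy_density (exp 1) Q P)"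
    and G_meas: "G \<in> borel_measurable Q" and G_pos: "AE x in P. 0 < G x"
    and G_nn_int: "(\<integral>\<^sup>+x. ennreal (G x) \<partial>Q) \<le> 1"
    and h_int: "integrable P h" and h_le: "AE x in P. h x \<le> ln (G x)"
  shows "(\<integral>x. h x \<partial>P) \<le> KL_divergence (exp 1) Q P"
proof -
  interpret P: prob_space P by fact
  define d where "d x = enn2real (RN_deriv Q P x)" for x
  have d_pos: "AE x in P. 0 < d x"
    unfolding d_def using P.sigma_finite_measure_axioms Q sets_Q ac by (rule AE_enn2real_RN_deriv_pos)
  have d_meas: "d \<in> borel_measurable P"
    using borel_measurable_RN_deriv[of Q P] unfolding d_def measurable_cong_sets[OF sets_Q refl]
    by simp
  have ln_d: "entropy_density (exp 1) Q P = (\<lambda>x. ln (d x))"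
    by (simp add: entropy_density_def d_def log_def comp_def)
  have ratio_nn_int: "(\<integral>\<^sup>+x. ennreal (G x / d x) \<partial>P) \<le> 1"
    unfolding d_def using nn_integral_divide_RN_deriv_le[OF Q sets_Q ac G_meas] G_nn_int by simp
  have ratio_nonneg: "AE x in P. 0 \<le> G x / d x"
    using G_pos d_pos by eventually_elim simp
  have ratio_int: "integrable P (\<lambda>x. G x / d x)"
    using ratio_nonneg ratio_nn_int G_meas d_meas
    by (intro integrableI_nonneg)
       (auto simp: measurable_cong_sets[OF sets_Q refl] top.not_eq_extremum intro: le_less_trans)
  have "ennreal (\<integral>x. G x / d x \<partial>P) = (\<integral>\<^sup>+x. ennreal (G x / d x) \<partial>P)"
    using ratio_int ratio_nonneg by (intro nn_integral_eq_integral[symmetric])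
  then have ratio_le: "(\<integral>x. G x / d x \<partial>P) \<le> 1"
    using ratio_nn_int by (metis ennreal_le_1)
  have "AE x in P. h x - ln (d x) \<le> G x / d x - 1"
    using h_le G_pos d_pos
  proof eventually_elim
    case (elim x)
    then have "ln (G x) - ln (d x) \<le> G x / d x - 1"
      using ln_le_minus_one[of "G x / d x"] by (simp add: ln_div)
    then show ?case using elim by simp
  qed
  then have "(\<integral>x. h x - ln (d x) \<partial>P) \<le> (\<integral>x. G x / d x - 1 \<partial>P)"
    using h_int ent_int ratio_int unfolding ln_d by (intro integral_mono_AE) auto
  then show ?thesis
    using h_int ent_int ratio_int ratio_le
    by (simp add: KL_divergence_def ln_d P.prob_space)
qed

lemma sets_marg_V [simp, measurable_cong]: "sets (marg_V P MV) = sets MV"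
  unfolding marg_V_def by simp

lemma space_marg_V [simp]: "space (marg_V P MV) = space MV"
  unfolding marg_V_def by simp

lemma prob_space_marg_V:
  assumes "prob_space P" "sets P = sets (MU \<Otimes>\<^sub>M MV)"
  shows "prob_space (marg_V P MV)"
  unfolding marg_V_def using assms
  by (intro prob_space.prob_space_distr) (auto simp: measurable_cong_sets[OF assms(2) refl])

lemma mutual_info_eq_KL_divergence:
  assumes P: "prob_space P" and sets_P: "sets P = sets (MU \<Otimes>\<^sub>M MV)"
  defines "Q \<equiv> distr P MU fst \<Otimes>\<^sub>M marg_V P MV"
  shows "mutual_info MU MV P =
    (if absolutely_continuous Q P \<and> integrable P (entropy_density (exp 1) Q P)
     then ereal (KL_divergence (exp 1) Q P) else \<infinity>)"
proof -
  have "distr P (MU \<Otimes>\<^sub>M MV) (\<lambda>x. (fst x, snd x)) = P"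
    using distr_id2[of "MU \<Otimes>\<^sub>M MV" P] sets_P by simp
  then show ?thesis
    unfolding mutual_info_def Let_def prob_space.mutual_information_def[OF P] Q_def marg_V_def
    by simp
qed

lemma measurable_nce_ratio:
  assumes f_meas[measurable]: "f \<in> borel_measurable (MU \<Otimes>\<^sub>M MV)"
  shows "(\<lambda>(x, vs). nce_ratio k f (fst x) (snd x) vs)
    \<in> borel_measurable ((MU \<Otimes>\<^sub>M MV) \<Otimes>\<^sub>M (\<Pi>\<^sub>M j\<in>{2..k}. MV))"
  unfolding nce_ratio_def by measurable

lemma measurable_nce_ratio_marg_V:
  assumes sets_P: "sets P = sets (MU \<Otimes>\<^sub>M MV)" and f_meas: "f \<in> borel_measurable (MU \<Otimes>\<^sub>M MV)"
  shows "(\<lambda>(x, vs). nce_ratio k f (fst x) (snd x) vs)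
    \<in> borel_measurable (P \<Otimes>\<^sub>M (\<Pi>\<^sub>M j\<in>{2..k}. marg_V P MV))"
proof -
  have sets_eq: "sets (P \<Otimes>\<^sub>M (\<Pi>\<^sub>M j\<in>{2..k}. marg_V P MV))
      = sets ((MU \<Otimes>\<^sub>M MV) \<Otimes>\<^sub>M (\<Pi>\<^sub>M j\<in>{2..k}. MV))"
    using sets_P by (intro sets_pair_measure_cong sets_PiM_cong) auto
  show ?thesis
    unfolding measurable_cong_sets[OF sets_eq refl] by (rule measurable_nce_ratio[OF f_meas])
qed

lemma nn_integral_nce_ratio_product_marginals:
  fixes P :: "('a \<times> 'b) measure" and f :: "'a \<times> 'b \<Rightarrow> real"
  assumes P: "prob_space P" and sets_P: "sets P = sets (MU \<Otimes>\<^sub>M MV)" and k: "0 < k"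
    and f_meas: "f \<in> borel_measurable (MU \<Otimes>\<^sub>M MV)"
  shows "(\<integral>\<^sup>+x. \<integral>\<^sup>+\<omega>. ennreal (nce_ratio k f (fst x) (snd x) \<omega>) \<partial>(\<Pi>\<^sub>M j\<in>{2..k}. marg_V P MV)
            \<partial>(distr P MU fst \<Otimes>\<^sub>M marg_V P MV)) = 1"
proof -
  let ?M = "distr P MU fst" and ?\<mu> = "marg_V P MV"
  interpret M: prob_space ?M
    using P sets_P by (intro prob_space.prob_space_distr) (auto simp: measurable_cong_sets[OF sets_P refl])
  interpret \<mu>: prob_space ?\<mu>
    using P sets_P by (rule prob_space_marg_V)
  interpret \<Pi>: prob_space "\<Pi>\<^sub>M j\<in>{2..k}. ?\<mu>"
    by (intro prob_space_PiM \<mu>.prob_space_axioms)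
  have sets_M\<mu>: "sets (?M \<Otimes>\<^sub>M ?\<mu>) = sets (MU \<Otimes>\<^sub>M MV)"
    by (intro sets_pair_measure_cong) auto
  have f_meas'[measurable]: "f \<in> borel_measurable (?M \<Otimes>\<^sub>M ?\<mu>)"
    unfolding measurable_cong_sets[OF sets_M\<mu> refl] by (rule f_meas)
  have meas: "(\<lambda>x. \<integral>\<^sup>+\<omega>. ennreal (nce_ratio k f (fst x) (snd x) \<omega>) \<partial>(\<Pi>\<^sub>M j\<in>{2..k}. ?\<mu>))
      \<in> borel_measurable (?M \<Otimes>\<^sub>M ?\<mu>)"
    unfolding nce_ratio_def by measurable
  have "(\<integral>\<^sup>+x. \<integral>\<^sup>+\<omega>. ennreal (nce_ratio k f (fst x) (snd x) \<omega>) \<partial>(\<Pi>\<^sub>M j\<in>{2..k}. ?\<mu>) \<partial>(?M \<Otimes>\<^sub>M ?\<mu>))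
    = (\<integral>\<^sup>+u. \<integral>\<^sup>+v. \<integral>\<^sup>+\<omega>. ennreal (nce_ratio k f u v \<omega>) \<partial>(\<Pi>\<^sub>M j\<in>{2..k}. ?\<mu>) \<partial>?\<mu> \<partial>?M)"
    using \<mu>.nn_integral_fst[OF meas] by simp
  also have "\<dots> = (\<integral>\<^sup>+u. 1 \<partial>?M)"
  proof (intro nn_integral_cong)
    fix u assume "u \<in> space ?M"
    then have e_meas: "(\<lambda>v. exp (f (u, v))) \<in> borel_measurable ?\<mu>"
      by measurable
    have "card {2..k} + 1 = k"
      using k by simp
    with nn_integral_nce_ratio[OF \<mu>.prob_space_axioms e_meas exp_gt_zero finite_atLeastAtMost[of 2 k]]
    show "(\<integral>\<^sup>+v. \<integral>\<^sup>+\<omega>. ennreal (nce_ratio k f u v \<omega>) \<partial>(\<Pi>\<^sub>M j\<in>{2..k}. ?\<mu>) \<partial>?\<mu>) = 1"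
      unfolding nce_ratio_def by simp
  qed
  also have "\<dots> = 1"
    using M.emeasure_space_1 by simp
  finally show ?thesis .
qed

lemma L_CNCE_le_L_NCE:
  fixes P :: "('a \<times> 'b) measure" and f :: "'a \<times> 'b \<Rightarrow> real" and S :: "'a \<Rightarrow> 'b set"
  assumes P: "prob_space P" and sets_P: "sets P = sets (MU \<Otimes>\<^sub>M MV)" and k: "0 < k"
    and c_fin: "\<And>u. u \<in> space MU \<Longrightarrow> integrable (marg_V P MV) (\<lambda>v. exp (f (u, v)))"
    and S_sets: "\<And>u. u \<in> space MU \<Longrightarrow> S u \<in> sets MV"
    and S_pos: "\<And>u. u \<in> space MU \<Longrightarrow> measure (marg_V P MV) (S u) > 0"
    and S_above: "\<And>u v. u \<in> space MU \<Longrightarrow> v \<in> S u \<Longrightarrow>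
                    (\<integral>v. exp (f (u, v)) \<partial>marg_V P MV) \<le> exp (f (u, v))"
    and int_NCE_inner: "AE x in P. integrable (\<Pi>\<^sub>M j\<in>{2..k}. marg_V P MV)
                                     (nce_score k f (fst x) (snd x))"
    and int_NCE: "integrable P (\<lambda>x. \<integral>vs. nce_score k f (fst x) (snd x) vs
                                     \<partial>(\<Pi>\<^sub>M j\<in>{2..k}. marg_V P MV))"
    and int_CNCE_inner: "AE x in P. integrable (q_neg P MV k S (fst x))
                                     (nce_score k f (fst x) (snd x))"
    and int_CNCE: "integrable P (\<lambda>x. \<integral>vs. nce_score k f (fst x) (snd x) vs
                                     \<partial>(q_neg P MV k S (fst x)))"
  shows "L_CNCE P MV k f S \<le> L_NCE P MV k f"
  unfolding L_CNCE_def L_NCE_def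
proof (rule integral_mono_AE[OF int_CNCE int_NCE])
  let ?\<mu> = "marg_V P MV"
  have \<mu>: "prob_space ?\<mu>"
    using P sets_P by (rule prob_space_marg_V)
  have space_P: "space P = space MU \<times> space MV"
    using sets_eq_imp_space_eq[OF sets_P] by (simp add: space_pair_measure)
  show "AE x in P. (\<integral>vs. nce_score k f (fst x) (snd x) vs \<partial>q_neg P MV k S (fst x))
      \<le> (\<integral>vs. nce_score k f (fst x) (snd x) vs \<partial>(\<Pi>\<^sub>M j\<in>{2..k}. ?\<mu>))"
    using int_NCE_inner int_CNCE_inner AE_space
  proof eventually_elim
    case (elim x)
    obtain u v1 where x: "x = (u, v1)" and u: "u \<in> space MU"
      using elim(3) space_P by auto
    let ?e = "\<lambda>v. exp (f (u, v))"
    let ?C = "ln (real k) + f (u, v1)"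
    have score: "nce_score k f u v1 = (\<lambda>vs. ?C - ln (?e v1 + (\<Sum>j\<in>{2..k}. ?e (vs j))))"
      by (intro ext nce_score_eq_diff[OF k])
    have mean_nonneg: "0 \<le> (\<integral>v. ?e v \<partial>?\<mu>)"
      by (intro integral_nonneg_AE) auto
    have "(\<integral>vs. ?C - ln (?e v1 + (\<Sum>j\<in>{2..k}. ?e (vs j))) \<partial>(\<Pi>\<^sub>M j\<in>{2..k}. uniform_measure ?\<mu> (S u)))
        \<le> ?C - ln (?e v1 + real (card {2..k}) * (\<integral>v. ?e v \<partial>?\<mu>))"
      using elim(2) S_sets[OF u] S_pos[OF u] S_above[OF u] mean_nonneg
      unfolding x fst_conv snd_conv q_neg_def score
      by (intro integral_PiM_uniform_ln_sum_le[OF \<mu>])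
         (auto intro!: add_pos_nonneg)
    also have "\<dots> \<le> (\<integral>vs. ?C - ln (?e v1 + (\<Sum>j\<in>{2..k}. ?e (vs j))) \<partial>(\<Pi>\<^sub>M j\<in>{2..k}. ?\<mu>))"
      using elim(1) c_fin[OF u] unfolding x fst_conv snd_conv score
      by (intro integral_PiM_ln_sum_ge[OF \<mu>]) auto
    finally show ?case
      unfolding x fst_conv snd_conv q_neg_def score .
  qed
qed

lemma L_NCE_le_mutual_info:
  fixes P :: "('a \<times> 'b) measure" and f :: "'a \<times> 'b \<Rightarrow> real"
  assumes P: "prob_space P" and sets_P: "sets P = sets (MU \<Otimes>\<^sub>M MV)" and k: "0 < k"
    and f_meas: "f \<in> borel_measurable (MU \<Otimes>\<^sub>M MV)"
    and int_NCE_inner: "AE x in P. integrable (\<Pi>\<^sub>M j\<in>{2..k}. marg_V P MV)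
                                     (nce_score k f (fst x) (snd x))"
    and int_NCE: "integrable P (\<lambda>x. \<integral>vs. nce_score k f (fst x) (snd x) vs
                                     \<partial>(\<Pi>\<^sub>M j\<in>{2..k}. marg_V P MV))"
  shows "ereal (L_NCE P MV k f) \<le> mutual_info MU MV P"
proof -
  define N where "N = (\<Pi>\<^sub>M j\<in>{2..k}. marg_V P MV)"
  define Q where "Q = distr P MU fst \<Otimes>\<^sub>M marg_V P MV"
  define G where "G x = (\<integral>\<omega>. nce_ratio k f (fst x) (snd x) \<omega> \<partial>N)" for x
  interpret N: prob_space N
    unfolding N_def using prob_space_marg_V[OF P sets_P] by (intro prob_space_PiM)
  have ratio_pos: "0 < nce_ratio k f u v \<omega>" for u v \<omega>
    using k by (rule nce_ratio_pos)
  have ratio_meas[measurable]: "case_prod (\<lambda>x. nce_ratio k f (fst x) (snd x)) \<in> borel_measurable (P \<Otimes>\<^sub>M N)"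
    unfolding N_def using sets_P f_meas by (rule measurable_nce_ratio_marg_V)
  have ratio_int: "integrable N (nce_ratio k f (fst x) (snd x))" if "x \<in> space P" for x
    using measurable_Pair2[OF ratio_meas that]
    by (intro N.integrable_const_bound[where B="real k"] AE_I2)
       (auto simp: abs_of_pos[OF ratio_pos] nce_ratio_le)
  have sets_Q: "sets Q = sets P"
    unfolding Q_def sets_P by (intro sets_pair_measure_cong) auto
  have G_meas: "G \<in> borel_measurable Q"
    unfolding G_def measurable_cong_sets[OF sets_Q refl] by measurable
  have "(\<integral>\<^sup>+x. ennreal (G x) \<partial>Q) = (\<integral>\<^sup>+x. \<integral>\<^sup>+\<omega>. ennreal (nce_ratio k f (fst x) (snd x) \<omega>) \<partial>N \<partial>Q)"
    unfolding G_def using ratio_int ratio_pos sets_eq_imp_space_eq[OF sets_Q]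
    by (intro nn_integral_cong nn_integral_eq_integral[symmetric] AE_I2)
       (auto intro: less_imp_le)
  also have "\<dots> = 1"
    unfolding Q_def N_def using nn_integral_nce_ratio_product_marginals[OF P sets_P k f_meas] .
  finally have G_nn_int: "(\<integral>\<^sup>+x. ennreal (G x) \<partial>Q) = 1" .
  have G_pos: "AE x in P. 0 < G x"
    unfolding G_def using ratio_int ratio_pos by (intro AE_I2 N.expectation_greater) auto
  have ln_G: "AE x in P. (\<integral>vs. nce_score k f (fst x) (snd x) vs \<partial>N) \<le> ln (G x)"
    using int_NCE_inner AE_space
  proof eventually_elim
    case (elim x)
    have score: "nce_score k f (fst x) (snd x) = (\<lambda>\<omega>. ln (nce_ratio k f (fst x) (snd x) \<omega>))"
      by (intro ext nce_score_eq_ln_ratio)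
    have "integrable N (\<lambda>\<omega>. ln (nce_ratio k f (fst x) (snd x) \<omega>))"
      using elim(1) unfolding score N_def .
    then show ?case
      unfolding score G_def using ratio_int[OF elim(2)] ratio_pos
      by (intro N.expectation_ln_le_ln_expectation) auto
  qed
  have Q: "sigma_finite_measure Q"
    unfolding Q_def using P sets_P
    by (intro prob_space_imp_sigma_finite prob_space_pair prob_space_marg_V prob_space.prob_space_distr)
       (auto simp: measurable_cong_sets[OF sets_P refl])
  have "L_NCE P MV k f \<le> KL_divergence (exp 1) Q P"
    if "absolutely_continuous Q P" "integrable P (entropy_density (exp 1) Q P)"
    unfolding L_NCE_def N_def[symmetric]
    by (rule KL_divergence_ge_integral[OF P Q sets_Q that G_meas G_pos _ int_NCE[folded N_def] ln_G])
       (simp add: G_nn_int)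
  then show ?thesis
    using mutual_info_eq_KL_divergence[OF P sets_P] unfolding Q_def by simp
qed

theorem theorem1:
  fixes P :: "('a \<times> 'b) measure" and MU :: "'a measure" and MV :: "'b measure"
    and k :: nat and f :: "'a \<times> 'b \<Rightarrow> real"
    and B :: "'a \<Rightarrow> real set" and S :: "'a \<Rightarrow> 'b set"
  assumes P: "prob_space P" and sets_P: "sets P = sets (MU \<Otimes>\<^sub>M MV)"
    and k: "k \<ge> 2"
    and f_meas: "f \<in> borel_measurable (MU \<Otimes>\<^sub>M MV)"
    and c_fin: "\<And>u. u \<in> space MU \<Longrightarrow> integrable (marg_V P MV) (\<lambda>v. exp (f (u, v)))"
    and B_borel: "\<And>u. u \<in> space MU \<Longrightarrow> B u \<in> sets borel"
    and B_lower: "\<And>u b. u \<in> space MU \<Longrightarrow> b \<in> B u \<Longrightarrow>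
                    b > (\<integral>v. exp (f (u, v)) \<partial>marg_V P MV)"
    and S_def: "\<And>u. S u = {v \<in> space MV. exp (f (u, v)) \<in> B u}"
    and S_pos: "\<And>u. u \<in> space MU \<Longrightarrow> measure (marg_V P MV) (S u) > 0"
    and int_NCE_inner: "AE x in P. integrable (PiM {2..k} (\<lambda>_. marg_V P MV))
                                     (nce_score k f (fst x) (snd x))"
    and int_NCE: "integrable P (\<lambda>x. \<integral>vs. nce_score k f (fst x) (snd x) vs
                                     \<partial>(PiM {2..k} (\<lambda>_. marg_V P MV)))"
    and int_CNCE_inner: "AE x in P. integrable (q_neg P MV k S (fst x))
                                     (nce_score k f (fst x) (snd x))"
    and int_CNCE: "integrable P (\<lambda>x. \<integral>vs. nce_score k f (fst x) (snd x) vs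
                                     \<partial>(q_neg P MV k S (fst x)))"
  shows "L_CNCE P MV k f S \<le> L_NCE P MV k f
         \<and> ereal (L_NCE P MV k f) \<le> mutual_info MU MV P"
proof -
  have S_sets: "S u \<in> sets MV" if u: "u \<in> space MU" for u
  proof -
    have "(\<lambda>v. exp (f (u, v))) \<in> borel_measurable MV"
      using f_meas u by measurable
    from measurable_sets[OF this B_borel[OF u]] show ?thesis
      unfolding S_def by (simp add: vimage_def Int_def conj_commute)
  qed
  have S_above: "(\<integral>v. exp (f (u, v)) \<partial>marg_V P MV) \<le> exp (f (u, v))"
    if "u \<in> space MU" "v \<in> S u" for u v
    using B_lower[OF that(1)] that(2) unfolding S_def by (auto intro: less_imp_le)
  have "0 < k"
    using k by simp
  then show ?thesis
    using L_CNCE_le_L_NCE[OF P sets_P _ c_fin S_sets S_pos S_above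
        int_NCE_inner int_NCE int_CNCE_inner int_CNCE]
      L_NCE_le_mutual_info[OF P sets_P _ f_meas int_NCE_inner int_NCE]
    by simp
qed

end
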